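(* Let $D\ge2$. There exist constants $c_0,c>0$ depending only on $D$ such that: let $0<\varepsilon<c_0$, $0<\tau\le1$, $\eta>0$, let $E\subset\mathbb R^D$ be finite with $\mathrm{diam}(E)\leq1$ and $|x-y|\geq\tau$ for distinct $x,y\in E$. Let $\rho:\mathbb R^D\to\mathbb R^D$ satisfy $|\rho(x)-x|\leq\eta$ for all $x\in E$, and suppose $\eta<c\varepsilon\tau$. Then there exists an $\varepsilon$-distorted diffeomorphism $\Phi$ of $\mathbb R^D$ such that (a) $\Phi(x)=x$ whenever $\mathrm{dist}(x,E)\geq10$, and (b) $\Phi(x)=x+[z-\rho(z)]$ for $x\in B(z,\tau/10)$, $z\in E$.
   Context: An $\varepsilon$-distorted diffeomorphism is a diffeomorphism $\Phi$ of $\mathbb R^D$ onto $\mathbb R^D$ with $(1+\varepsilon)^{-1}I\leq(\nabla\Phi(x))^T\nabla\Phi(x)\leq(1+\varepsilon)I$ for all $x$. $B(z,r)$ is the open ball. *)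

theory Defs
  imports "HOL-Analysis.Analysis"
begin

text \<open>An epsilon-distorted diffeomorphism of R^D (here R^D = real^'n):
  a bijection Phi of R^D onto R^D which is a C^1 diffeomorphism (Phi and its
  inverse are continuously differentiable), whose Jacobian matrix M x = nabla Phi(x)
  satisfies (1+eps)^(-1) I <= (M x)^T (M x) <= (1+eps) I in the Loewner order
  (the order of symmetric matrices given by quadratic forms).\<close>

definition eps_distorted_diffeo :: "real \<Rightarrow> (real^'n \<Rightarrow> real^'n) \<Rightarrow> bool" where
  "eps_distorted_diffeo eps Phi \<longleftrightarrow>
     bij Phi \<and>
     (\<exists>M :: real^'n \<Rightarrow> real^'n^'n.
        (\<forall>x. (Phi has_derivative (\<lambda>v. M x *v v)) (at x)) \<and>
        continuous_on UNIV M \<and>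
        (\<forall>x v. inverse (1 + eps) * (v \<bullet> v) \<le> v \<bullet> ((transpose (M x) ** M x) *v v) \<and>
               v \<bullet> ((transpose (M x) ** M x) *v v) \<le> (1 + eps) * (v \<bullet> v))) \<and>
     (\<exists>N :: real^'n \<Rightarrow> real^'n^'n.
        (\<forall>y. (inv Phi has_derivative (\<lambda>v. N y *v v)) (at y)) \<and>
        continuous_on UNIV N)"

end

theory Submission
  imports Defs
begin

text \<open>
  Rescale a fixed C^1 bump, equal to 1 on the ball of radius 1/10 and vanishing
  outside the ball of radius 1/2, to each ball B(z, tau) with z in E, and let
  Phi = id + g, where g is the sum of these bumps weighted by the translations
  z - rho(z). As the points of E are tau-separated, at most one bump is active at
  any point, so the derivative of g has norm at most 10 eta / tau < eps/4. Hence
  id + g is bijective (identity plus a contraction), its Jacobian J satisfies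
  |J v - v| \<le> eps/4 |v|, which gives the two-sided bound on J^T J, and the
  inverse function theorem yields the continuous derivative of the inverse.
\<close>

definition ramp_sq :: "real \<Rightarrow> real" where
  "ramp_sq t = (max 0 t)\<^sup>2"

lemma has_real_derivative_ramp_sq: "(ramp_sq has_real_derivative (2 * max 0 t)) (at t)"
proof -
  have "((\<lambda>x. if x \<in> {..0::real} then 0 else x\<^sup>2) has_derivative
      (if t \<in> {..0} then (\<lambda>h. 0) else (\<lambda>h. 2 * t * h))) (at t within ({..0} \<union> {0..}))"
    by (rule has_derivative_If_within_closures) (auto intro!: derivative_eq_intros)
  moreover have "(\<lambda>x. if x \<in> {..0::real} then 0 else x\<^sup>2) = ramp_sq"
    by (auto simp: ramp_sq_def max_def fun_eq_iff)
  moreover have "(if t \<in> {..0} then (\<lambda>h. 0) else (\<lambda>h. 2 * t * h)) = (\<lambda>h. (2 * max 0 t) * h)"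
    by (auto simp: max_def fun_eq_iff)
  moreover have "{..0::real} \<union> {0..} = UNIV" by auto
  ultimately show ?thesis by (simp add: has_field_derivative_def)
qed

text \<open>A C^1 step from 0 to 1: it is 2t^2 on [0, 1/2] and 1 - 2(1 - t)^2 on [1/2, 1].\<close>

definition smooth_step :: "real \<Rightarrow> real" where
  "smooth_step t = 2 * ramp_sq t - 4 * ramp_sq (t - 1/2) + 2 * ramp_sq (t - 1)"

definition smooth_step' :: "real \<Rightarrow> real" where
  "smooth_step' t = 4 * max 0 t - 8 * max 0 (t - 1/2) + 4 * max 0 (t - 1)"

lemma has_real_derivative_smooth_step: "(smooth_step has_real_derivative smooth_step' t) (at t)"
proof -
  have shift: "((\<lambda>s. ramp_sq (s - a)) has_real_derivative (2 * max 0 (t - a))) (at t)" for a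
  proof -
    have "((\<lambda>s. s - a) has_real_derivative 1) (at t)"
      by (auto intro!: derivative_eq_intros)
    from DERIV_chain2[OF has_real_derivative_ramp_sq this] show ?thesis by simp
  qed
  have "((\<lambda>t. 2 * ramp_sq (t - 0) - 4 * ramp_sq (t - 1/2) + 2 * ramp_sq (t - 1)) has_real_derivative
      (2 * (2 * max 0 (t - 0)) - 4 * (2 * max 0 (t - 1/2)) + 2 * (2 * max 0 (t - 1)))) (at t)"
    by (intro DERIV_add DERIV_diff DERIV_cmult shift)
  then show ?thesis
    unfolding smooth_step_def[abs_def] smooth_step'_def by (simp add: algebra_simps)
qed

lemma smooth_step_eq_0: "t \<le> 0 \<Longrightarrow> smooth_step t = 0"
  by (simp add: smooth_step_def ramp_sq_def)

lemma smooth_step_eq_1: "1 \<le> t \<Longrightarrow> smooth_step t = 1"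
  by (simp add: smooth_step_def ramp_sq_def power2_eq_square algebra_simps)

lemma smooth_step'_eq_0: "1 \<le> t \<Longrightarrow> smooth_step' t = 0"
  by (simp add: smooth_step'_def)

lemma abs_smooth_step'_le: "\<bar>smooth_step' t\<bar> \<le> 2"
  by (simp add: smooth_step'_def max_def)

lemma continuous_on_smooth_step': "continuous_on UNIV smooth_step'"
  unfolding smooth_step'_def[abs_def] by (intro continuous_intros)

text \<open>The affine change of variable maps x \<bullet> x \<in> [1/100, 1/4] onto [0, 1].\<close>

definition bump :: "'a::real_inner \<Rightarrow> real" where
  "bump x = 1 - smooth_step ((x \<bullet> x - 1/100) * (25/6))"

definition bump_grad :: "'a::real_inner \<Rightarrow> 'a" where
  "bump_grad x = (- (smooth_step' ((x \<bullet> x - 1/100) * (25/6)) * (25/6) * 2)) *\<^sub>R x"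

lemma has_derivative_bump: "(bump has_derivative (\<lambda>h. bump_grad x \<bullet> h)) (at x)"
proof -
  have "((\<lambda>x. (x \<bullet> x - 1/100) * (25/6)) has_derivative (\<lambda>h. (x \<bullet> h + h \<bullet> x) * (25/6))) (at x)"
    by (auto intro!: derivative_eq_intros)
  from DERIV_compose_FDERIV[OF has_real_derivative_smooth_step this]
  have "(bump has_derivative
      (\<lambda>h. 0 - (x \<bullet> h + h \<bullet> x) * (25/6) * smooth_step' ((x \<bullet> x - 1/100) * (25/6)))) (at x)"
    unfolding bump_def[abs_def] by (intro derivative_intros)
  then show ?thesis
    by (simp add: bump_grad_def inner_commute algebra_simps)
qed

lemma bump_eq_1:
  assumes "norm x < 1/10"
  shows "bump x = 1"
proof -
  have "(norm x)\<^sup>2 < (1/10)\<^sup>2" using assms by (intro power_strict_mono) auto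
  then have "x \<bullet> x < 1/100" unfolding power2_norm_eq_inner by (simp add: power2_eq_square)
  then show ?thesis by (simp add: bump_def smooth_step_eq_0)
qed

lemma bump_eq_0:
  assumes "1/2 \<le> norm x"
  shows "bump x = 0" and "bump_grad x = 0"
proof -
  have "(1/2)\<^sup>2 \<le> (norm x)\<^sup>2" using assms by (intro power_mono) auto
  then have "1/4 \<le> x \<bullet> x" unfolding power2_norm_eq_inner by (simp add: power2_eq_square)
  then have "1 \<le> (x \<bullet> x - 1/100) * (25/6)" by simp
  then show "bump x = 0" and "bump_grad x = 0"
    by (simp_all add: bump_def bump_grad_def smooth_step_eq_1 smooth_step'_eq_0)
qed

lemma norm_bump_grad_le: "norm (bump_grad x) \<le> 10"
proof (cases "1/2 \<le> norm x")
  case True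
  then show ?thesis by (simp add: bump_eq_0)
next
  case False
  have "norm (bump_grad x) = \<bar>smooth_step' ((x \<bullet> x - 1/100) * (25/6))\<bar> * (25/6) * 2 * norm x"
    by (simp add: bump_grad_def abs_mult)
  also have "\<dots> \<le> 2 * (25/6) * 2 * (1/2)"
    using False abs_smooth_step'_le by (intro mult_mono) auto
  finally show ?thesis by simp
qed

lemma continuous_on_bump_grad: "continuous_on UNIV bump_grad"
  unfolding bump_grad_def[abs_def]
  by (intro continuous_intros continuous_on_compose2[OF continuous_on_smooth_step']) auto

lemma norm_matrix_vector_mult_le:
  fixes A :: "real^'n^'m"
  shows "norm (A *v x) \<le> real CARD('m) * real CARD('n) * norm A * norm x"
proof -
  have "norm (A *v x) \<le> onorm ((*v) A) * norm x"
    by (rule onorm[OF matrix_vector_mul_bounded_linear])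
  also have "onorm ((*v) A) \<le> real CARD('m) * real CARD('n) * norm A"
  proof (rule onorm_le_matrix_component)
    fix i j
    have "\<bar>A $ i $ j\<bar> \<le> norm (A $ i)" by (rule component_le_norm_cart)
    also have "\<dots> \<le> norm A" by (rule Finite_Cartesian_Product.norm_nth_le)
    finally show "\<bar>A $ i $ j\<bar> \<le> norm A" .
  qed
  finally show ?thesis by (simp add: mult_right_mono)
qed

text \<open>
  Each column u of the inverse solves M x *v u x = w, and the uniform lower bound
  gives |u x - u x0| \<le> C |M x - M x0|.
\<close>

lemma continuous_on_matrix_right_inverse:
  fixes M M' :: "'a::t2_space \<Rightarrow> real^'n^'n"
  assumes "continuous_on UNIV M" and "0 < k"
    and lower: "\<And>x w. k * norm w \<le> norm (M x *v w)"
    and right_inverse: "\<And>x. M x ** M' x = mat 1"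
  shows "continuous_on UNIV M'"
proof -
  have column: "isCont (\<lambda>x. M' x *v w) x0" for w x0
  proof -
    let ?u = "\<lambda>x. M' x *v w"
    have solves: "M x *v ?u x = w" for x by (simp add: matrix_vector_mul_assoc right_inverse)
    define C where "C = real CARD('n) * real CARD('n) * norm (?u x0) / k"
    have bound: "norm (?u x - ?u x0) \<le> C * norm (M x - M x0)" for x
    proof -
      have "M x *v (?u x - ?u x0) = (M x0 - M x) *v ?u x0"
        by (simp add: matrix_vector_mult_diff_distrib matrix_vector_mult_diff_rdistrib solves)
      then have "k * norm (?u x - ?u x0) \<le> real CARD('n) * real CARD('n) * norm (M x - M x0) * norm (?u x0)"
        using lower[where x = x and w = "?u x - ?u x0"] norm_matrix_vector_mult_le[of "M x0 - M x" "?u x0"]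
        by (simp add: norm_minus_commute)
      then show ?thesis using \<open>0 < k\<close> by (simp add: C_def field_simps)
    qed
    have "((\<lambda>x. C * norm (M x - M x0)) \<longlongrightarrow> 0) (at x0)"
      using assms(1) by (intro tendsto_mult_right_zero tendsto_norm_zero)
        (simp add: continuous_on_eq_continuous_at isCont_def LIM_zero)
    then have "((\<lambda>x. ?u x - ?u x0) \<longlongrightarrow> 0) (at x0)"
      by (rule Lim_null_comparison[rotated]) (simp add: bound)
    then show ?thesis by (simp add: isCont_def LIM_zero_iff)
  qed
  have columns: "M' = (\<lambda>x. \<chi> i j. (M' x *v axis j 1) $ i)"
    by (auto simp: fun_eq_iff vec_eq_iff matrix_vector_mult_def axis_def if_distrib cong: if_cong)
  have "continuous_on UNIV (\<lambda>x. M' x *v w)" for w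
    using column by (simp add: continuous_at_imp_continuous_on)
  then show ?thesis by (subst columns) (intro continuous_intros)
qed

lemma inner_transpose_mult_self:
  fixes A :: "real^'n^'m"
  shows "w \<bullet> ((transpose A ** A) *v w) = (norm (A *v w))\<^sup>2"
  by (metis dot_lmul_matrix inner_commute matrix_vector_mul_assoc power2_norm_eq_inner
      vector_transpose_matrix)

lemma distortion_bounds_near_identity:
  fixes A :: "real^'n^'n"
  assumes "0 < eps" "eps < 1"
    and near_id: "\<And>w. norm (A *v w - w) \<le> eps/4 * norm w"
  shows "inverse (1 + eps) * (w \<bullet> w) \<le> w \<bullet> ((transpose A ** A) *v w)"
    and "w \<bullet> ((transpose A ** A) *v w) \<le> (1 + eps) * (w \<bullet> w)"
proof -
  define d where "d = eps/4"
  have d: "0 < d" "d < 1/4" using assms by (auto simp: d_def)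
  have "norm w \<le> norm (A *v w) + norm (A *v w - w)"
    using norm_triangle_sub[of w "A *v w"] by (simp add: norm_minus_commute)
  then have "((1 - d) * norm w)\<^sup>2 \<le> (norm (A *v w))\<^sup>2"
    using near_id[of w] d mult_right_mono[of d 1 "norm w"] by (intro power_mono) (auto simp: d_def algebra_simps)
  moreover have "inverse (1 + eps) \<le> (1 - d)\<^sup>2"
  proof -
    have "0 \<le> d * (2 - 7 * d + 4 * d\<^sup>2)" using d by (intro mult_nonneg_nonneg) auto
    moreover have "(1 - d)\<^sup>2 * (1 + 4 * d) = 1 + d * (2 - 7 * d + 4 * d\<^sup>2)"
      by (simp add: power2_eq_square algebra_simps)
    ultimately have "1 \<le> (1 - d)\<^sup>2 * (1 + eps)" by (simp add: d_def)
    then show ?thesis using assms by (simp add: field_simps)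
  qed
  ultimately show "inverse (1 + eps) * (w \<bullet> w) \<le> w \<bullet> ((transpose A ** A) *v w)"
    using mult_right_mono[of "inverse (1 + eps)" "(1 - d)\<^sup>2" "(norm w)\<^sup>2"]
    by (simp add: inner_transpose_mult_self power_mult_distrib flip: power2_norm_eq_inner)
  have "norm (A *v w) \<le> norm w + norm (A *v w - w)"
    by (rule norm_triangle_sub)
  then have "(norm (A *v w))\<^sup>2 \<le> ((1 + d) * norm w)\<^sup>2"
    using near_id[of w] by (intro power_mono) (auto simp: d_def algebra_simps)
  moreover have "(1 + d)\<^sup>2 \<le> 1 + eps"
  proof -
    have "d * d \<le> d" using d by (simp add: mult_le_cancel_left1)
    moreover have "(1 + d)\<^sup>2 = 1 + 2 * d + d * d" by (simp add: power2_eq_square algebra_simps)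
    ultimately show ?thesis using d d_def by linarith
  qed
  ultimately show "w \<bullet> ((transpose A ** A) *v w) \<le> (1 + eps) * (w \<bullet> w)"
    using mult_right_mono[of "(1 + d)\<^sup>2" "1 + eps" "(norm w)\<^sup>2"]
    by (simp add: inner_transpose_mult_self power_mult_distrib flip: power2_norm_eq_inner)
qed

lemma bij_add_contraction:
  fixes g :: "'a::banach \<Rightarrow> 'a"
  assumes "0 \<le> d" "d < 1" and contraction: "\<And>x y. norm (g x - g y) \<le> d * norm (x - y)"
  shows "bij (\<lambda>x. x + g x)" and "(1 / (1 - d))-lipschitz_on UNIV (inv (\<lambda>x. x + g x))"
proof -
  let ?f = "\<lambda>x. x + g x"
  have lower: "(1 - d) * norm (x - y) \<le> norm (?f x - ?f y)" for x y
    using norm_triangle_ineq4[of "?f x - ?f y" "g x - g y"] contraction[of x y]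
    by (simp add: algebra_simps)
  have "inj ?f"
  proof (rule injI)
    fix x y assume "?f x = ?f y"
    with lower[of x y] \<open>d < 1\<close> show "x = y" by (simp add: mult_le_0_iff)
  qed
  moreover have "y \<in> range ?f" for y
  proof -
    have "\<exists>!x. y - g x = x"
      by (rule banach_fix_type[of d, where f = "\<lambda>x. y - g x"])
        (use assms in \<open>auto simp: dist_norm norm_minus_commute\<close>)
    then obtain x where "y - g x = x" by blast
    then have "y = ?f x" by (simp add: diff_eq_eq)
    then show ?thesis by (rule range_eqI)
  qed
  ultimately show "bij ?f" by (auto simp: bij_def)
  then have right_inverse: "?f (inv ?f y) = y" for y by (meson bij_inv_eq_iff)
  have "(1 - d) * dist (inv ?f a) (inv ?f b) \<le> dist a b" for a b
    using lower[of "inv ?f a" "inv ?f b"] by (simp only: right_inverse dist_norm)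
  then show "(1 / (1 - d))-lipschitz_on UNIV (inv ?f)"
    using \<open>d < 1\<close> by (intro lipschitz_onI) (auto simp: field_simps)
qed

lemma inverse_has_continuous_matrix_derivative:
  fixes f :: "real^'n \<Rightarrow> real^'n" and M :: "real^'n \<Rightarrow> real^'n^'n"
  assumes "bij f" and "continuous_on UNIV (inv f)"
    and deriv: "\<And>x. (f has_derivative (\<lambda>v. M x *v v)) (at x)"
    and "continuous_on UNIV M" and "0 < k" and lower: "\<And>x w. k * norm w \<le> norm (M x *v w)"
  shows "\<exists>N. (\<forall>y. (inv f has_derivative (\<lambda>v. N y *v v)) (at y)) \<and> continuous_on UNIV N"
proof -
  have "invertible (M x)" for x
  proof -
    have "inj ((*v) (M x))"
    proof (rule injI)
      fix a b assume "M x *v a = M x *v b"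
      then have "k * norm (a - b) \<le> 0"
        using lower[where x = x and w = "a - b"] by (simp add: matrix_vector_mult_diff_distrib)
      then show "a = b" using \<open>0 < k\<close> by (simp add: mult_le_0_iff)
    qed
    then show ?thesis by (simp add: invertible_left_inverse matrix_left_invertible_injective)
  qed
  then have "\<exists>A'. M x ** A' = mat 1 \<and> A' ** M x = mat 1" for x
    by (simp add: invertible_def)
  then have right_inverse: "M x ** matrix_inv (M x) = mat 1" for x
    unfolding matrix_inv_def by (rule someI2_ex) simp
  have "continuous_on UNIV (\<lambda>x. matrix_inv (M x))"
    using assms(4) \<open>0 < k\<close> lower right_inverse by (rule continuous_on_matrix_right_inverse)
  then have "continuous_on UNIV (\<lambda>y. matrix_inv (M (inv f y)))"
    by (rule continuous_on_compose2[OF _ assms(2)]) simp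
  moreover have "(inv f has_derivative (\<lambda>v. matrix_inv (M (inv f y)) *v v)) (at y)" for y
  proof -
    have "continuous_on UNIV f"
      by (rule has_derivative_continuous_on) (use deriv in \<open>auto intro: has_derivative_at_withinI\<close>)
    moreover have "inv f (f x) = x" for x
      using \<open>bij f\<close> by (simp add: bij_is_inj)
    ultimately have "(inv f has_derivative (\<lambda>v. matrix_inv (M (inv f y)) *v v)) (at (f (inv f y)))"
      by (intro has_derivative_inverse_strong[of UNIV _ f, OF _ _ _ _ deriv])
        (simp_all add: fun_eq_iff matrix_vector_mul_assoc right_inverse)
    moreover have "f (inv f y) = y"
      using \<open>bij f\<close> by (simp add: bij_is_surj surj_f_inv_f)
    ultimately show ?thesis by simp
  qed
  ultimately show ?thesis by (intro exI[of _ "\<lambda>y. matrix_inv (M (inv f y))"]) blast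
qed

lemma eps_distorted_diffeo_add_small_perturbation:
  fixes g :: "real^'n \<Rightarrow> real^'n" and g' :: "real^'n \<Rightarrow> real^'n \<Rightarrow> real^'n"
  assumes "0 < eps" "eps < 1"
    and deriv: "\<And>x. (g has_derivative g' x) (at x)"
    and small: "\<And>x h. norm (g' x h) \<le> eps/4 * norm h"
    and cont: "\<And>j. continuous_on UNIV (\<lambda>x. g' x (axis j 1))"
  shows "eps_distorted_diffeo eps (\<lambda>x. x + g x)"
proof -
  let ?f = "\<lambda>x. x + g x"
  have "norm (g x - g y) \<le> eps/4 * norm (x - y)" for x y
  proof -
    have "onorm (g' z) \<le> eps/4" for z by (rule onorm_le) (rule small)
    then show ?thesis
      by (intro differentiable_bound[of UNIV g g' "eps/4" x y]) (use deriv in auto)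
  qed
  note contraction = bij_add_contraction[of "eps/4" g, OF _ _ this]
  have bij: "bij ?f"
    by (rule contraction(1)) (use assms(1,2) in simp_all)
  have inv_cont: "continuous_on UNIV (inv ?f)"
    by (rule lipschitz_on_continuous_on[OF contraction(2)]) (use assms(1,2) in simp_all)
  define M where "M x = matrix (\<lambda>h. h + g' x h)" for x
  have lin: "linear (\<lambda>h. h + g' x h)" for x
    using bounded_linear_add[OF bounded_linear_ident has_derivative_bounded_linear[OF deriv]]
    by (rule bounded_linear.linear)
  have M: "M x *v h = h + g' x h" for x h
    unfolding M_def using matrix_vector_mul(2)[OF lin] by metis
  have f_deriv: "(?f has_derivative (\<lambda>h. M x *v h)) (at x)" for x
    unfolding M by (rule has_derivative_add[OF has_derivative_ident deriv])
  have "M = (\<lambda>x. \<chi> i j. (axis j 1 + g' x (axis j 1)) $ i)"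
    by (auto simp: M_def matrix_def fun_eq_iff)
  then have M_cont: "continuous_on UNIV M"
    by simp (intro continuous_intros cont)
  have near_id: "norm (M x *v w - w) \<le> eps/4 * norm w" for x w
    using small by (simp add: M)
  have lower: "(1 - eps/4) * norm w \<le> norm (M x *v w)" for x w
    using norm_triangle_sub[of w "M x *v w"] near_id[of x w]
    by (simp add: norm_minus_commute algebra_simps)
  have "inverse (1 + eps) * (v \<bullet> v) \<le> v \<bullet> ((transpose (M x) ** M x) *v v) \<and>
      v \<bullet> ((transpose (M x) ** M x) *v v) \<le> (1 + eps) * (v \<bullet> v)" for x v
    using distortion_bounds_near_identity[of eps "M x" v] assms(1,2) near_id[of x] by simp
  moreover have "\<exists>N. (\<forall>y. (inv ?f has_derivative (\<lambda>v. N y *v v)) (at y)) \<and> continuous_on UNIV N"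
    using inverse_has_continuous_matrix_derivative[of ?f M "1 - eps/4"] bij inv_cont f_deriv M_cont
      lower assms(2) by simp
  ultimately show ?thesis
    unfolding eps_distorted_diffeo_def using bij f_deriv M_cont by blast
qed

definition rescale :: "real \<Rightarrow> 'a::real_vector \<Rightarrow> 'a \<Rightarrow> 'a" where
  "rescale tau z x = (1/tau) *\<^sub>R (x - z)"

lemma norm_rescale: "0 < tau \<Longrightarrow> norm (rescale tau z x) = dist x z / tau"
  by (simp add: rescale_def dist_norm)

lemma bump_rescale_eq_0:
  assumes "0 < tau" "tau/2 \<le> dist x z"
  shows "bump (rescale tau z x) = 0" and "bump_grad (rescale tau z x) = 0"
  using bump_eq_0[of "rescale tau z x"] assms by (simp_all add: norm_rescale field_simps)

definition bump_sum :: "real \<Rightarrow> 'a::real_inner set \<Rightarrow> ('a \<Rightarrow> 'b::real_normed_vector) \<Rightarrow> 'a \<Rightarrow> 'b" where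
  "bump_sum tau E v x = (\<Sum>z\<in>E. bump (rescale tau z x) *\<^sub>R v z)"

definition bump_sum_deriv ::
    "real \<Rightarrow> 'a::real_inner set \<Rightarrow> ('a \<Rightarrow> 'b::real_normed_vector) \<Rightarrow> 'a \<Rightarrow> 'a \<Rightarrow> 'b" where
  "bump_sum_deriv tau E v x h = (\<Sum>z\<in>E. ((bump_grad (rescale tau z x) \<bullet> h) / tau) *\<^sub>R v z)"

lemma has_derivative_bump_sum:
  assumes "finite E"
  shows "(bump_sum tau E v has_derivative bump_sum_deriv tau E v x) (at x)"
proof -
  have "(rescale tau z has_derivative (\<lambda>h. (1/tau) *\<^sub>R h)) (at x)" for z
    unfolding rescale_def by (auto intro!: derivative_eq_intros)
  from has_derivative_compose[OF this has_derivative_bump]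
  have "((\<lambda>x. bump (rescale tau z x) *\<^sub>R v z) has_derivative
      (\<lambda>h. ((bump_grad (rescale tau z x) \<bullet> h) / tau) *\<^sub>R v z)) (at x)" for z
    using has_derivative_scaleR_left by fastforce
  then show ?thesis
    unfolding bump_sum_def[abs_def] bump_sum_deriv_def using assms
    by (intro has_derivative_sum) auto
qed

lemma continuous_on_bump_sum_deriv: "continuous_on UNIV (\<lambda>x. bump_sum_deriv tau E v x h)"
  unfolding bump_sum_deriv_def rescale_def divide_inverse
  by (intro continuous_intros continuous_on_compose2[OF continuous_on_bump_grad]) auto

lemma bump_sum_eq_0:
  assumes "0 < tau" "\<forall>z\<in>E. tau/2 \<le> dist x z"
  shows "bump_sum tau E v x = 0" and "bump_sum_deriv tau E v x h = 0"
  using assms by (simp_all add: bump_sum_def bump_sum_deriv_def bump_rescale_eq_0)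

lemma separated_dist_ge_half:
  assumes separated: "\<And>x y. x \<in> E \<Longrightarrow> y \<in> E \<Longrightarrow> x \<noteq> y \<Longrightarrow> tau \<le> dist x y"
    and "z0 \<in> E" "dist x z0 < tau/2" "z \<in> E" "z \<noteq> z0"
  shows "tau/2 \<le> dist x z"
  using separated[of z z0] dist_triangle3[of z z0 x] assms(2-) by (simp add: dist_commute)

lemma bump_sum_single:
  assumes "finite E" "0 < tau"
    and separated: "\<And>x y. x \<in> E \<Longrightarrow> y \<in> E \<Longrightarrow> x \<noteq> y \<Longrightarrow> tau \<le> dist x y"
    and "z0 \<in> E" "dist x z0 < tau/2"
  shows "bump_sum tau E v x = bump (rescale tau z0 x) *\<^sub>R v z0"
    and "bump_sum_deriv tau E v x h = ((bump_grad (rescale tau z0 x) \<bullet> h) / tau) *\<^sub>R v z0"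
proof -
  have single: "(\<Sum>z\<in>E. F z) = F z0"
    if "\<And>z. z \<in> E \<Longrightarrow> z \<noteq> z0 \<Longrightarrow> F z = 0" for F :: "'a \<Rightarrow> 'b"
    using sum.mono_neutral_right[of E "{z0}" F] that assms(1,4) by auto
  have "bump (rescale tau z x) = 0" "bump_grad (rescale tau z x) = 0" if "z \<in> E" "z \<noteq> z0" for z
    using bump_rescale_eq_0 separated_dist_ge_half[OF separated] assms(2,4,5) that by blast+
  then show "bump_sum tau E v x = bump (rescale tau z0 x) *\<^sub>R v z0"
    and "bump_sum_deriv tau E v x h = ((bump_grad (rescale tau z0 x) \<bullet> h) / tau) *\<^sub>R v z0"
    unfolding bump_sum_def bump_sum_deriv_def by (simp_all add: single)
qed

lemma norm_bump_sum_deriv_le: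
  assumes "finite E" "0 < tau"
    and separated: "\<And>x y. x \<in> E \<Longrightarrow> y \<in> E \<Longrightarrow> x \<noteq> y \<Longrightarrow> tau \<le> dist x y"
    and "0 \<le> B" and bounded: "\<And>z. z \<in> E \<Longrightarrow> norm (v z) \<le> B"
  shows "norm (bump_sum_deriv tau E v x h) \<le> 10 * B / tau * norm h"
proof (cases "\<exists>z0\<in>E. dist x z0 < tau/2")
  case False
  then have "bump_sum_deriv tau E v x h = 0"
    using \<open>0 < tau\<close> by (intro bump_sum_eq_0) (auto simp: not_less)
  then show ?thesis using \<open>0 < tau\<close> \<open>0 \<le> B\<close> by simp
next
  case True
  then obtain z0 where "z0 \<in> E" "dist x z0 < tau/2" by blast
  then have "norm (bump_sum_deriv tau E v x h) = (\<bar>bump_grad (rescale tau z0 x) \<bullet> h\<bar> / tau) * norm (v z0)"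
    using bump_sum_single(2)[OF assms(1,2) separated, of z0 x v h] \<open>0 < tau\<close> by simp
  also have "\<dots> \<le> (10 * norm h / tau) * B"
  proof (intro mult_mono divide_right_mono)
    have "\<bar>bump_grad (rescale tau z0 x) \<bullet> h\<bar> \<le> norm (bump_grad (rescale tau z0 x)) * norm h"
      by (rule Cauchy_Schwarz_ineq2)
    also have "\<dots> \<le> 10 * norm h"
      by (rule mult_right_mono[OF norm_bump_grad_le norm_ge_zero])
    finally show "\<bar>bump_grad (rescale tau z0 x) \<bullet> h\<bar> \<le> 10 * norm h" .
  qed (use \<open>0 < tau\<close> bounded \<open>z0 \<in> E\<close> in auto)
  finally show ?thesis by (simp add: mult_ac)
qed

lemma bump_sum_eq_on_ball:
  assumes "finite E" "0 < tau"
    and separated: "\<And>x y. x \<in> E \<Longrightarrow> y \<in> E \<Longrightarrow> x \<noteq> y \<Longrightarrow> tau \<le> dist x y"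
    and "z \<in> E" "x \<in> ball z (tau/10)"
  shows "bump_sum tau E v x = v z"
proof -
  have "dist x z < tau/10" using assms(5) by (simp add: dist_commute)
  then have "bump (rescale tau z x) = 1"
    using \<open>0 < tau\<close> by (intro bump_eq_1) (simp add: norm_rescale field_simps)
  moreover have "dist x z < tau/2" using \<open>dist x z < tau/10\<close> \<open>0 < tau\<close> by simp
  ultimately show ?thesis
    using bump_sum_single(1)[OF assms(1,2) separated \<open>z \<in> E\<close>, of x] by simp
qed

lemma eps_distorted_diffeo_translating_balls:
  fixes E :: "(real^'n) set" and v :: "real^'n \<Rightarrow> real^'n"
  assumes "0 < eps" "eps < 1" and "0 < tau" and "finite E"
    and separated: "\<And>x y. x \<in> E \<Longrightarrow> y \<in> E \<Longrightarrow> x \<noteq> y \<Longrightarrow> tau \<le> dist x y"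
    and small: "\<And>z. z \<in> E \<Longrightarrow> norm (v z) \<le> eps * tau / 40"
  shows "\<exists>Phi. eps_distorted_diffeo eps Phi \<and>
    (\<forall>x. (\<forall>y\<in>E. tau/2 \<le> dist x y) \<longrightarrow> Phi x = x) \<and>
    (\<forall>z\<in>E. \<forall>x\<in>ball z (tau/10). Phi x = x + v z)"
proof (intro exI conjI ballI allI impI)
  have "norm (bump_sum_deriv tau E v x h) \<le> eps/4 * norm h" for x h
    using norm_bump_sum_deriv_le[OF \<open>finite E\<close> \<open>0 < tau\<close> separated _ small] assms(1,3)
    by (simp add: field_simps)
  then show "eps_distorted_diffeo eps (\<lambda>x. x + bump_sum tau E v x)"
    using assms(1,2) has_derivative_bump_sum[OF \<open>finite E\<close>] continuous_on_bump_sum_deriv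
    by (intro eps_distorted_diffeo_add_small_perturbation)
  show "x + bump_sum tau E v x = x" if "\<forall>y\<in>E. tau/2 \<le> dist x y" for x
    using bump_sum_eq_0(1)[OF \<open>0 < tau\<close> that] by simp
  show "x + bump_sum tau E v x = x + v z" if "z \<in> E" "x \<in> ball z (tau/10)" for z x
    using bump_sum_eq_on_ball[OF \<open>finite E\<close> \<open>0 < tau\<close> separated that] by simp
qed

text \<open>
  The construction works with c0 = 1 and c = 1/40 in every dimension.
\<close>

theorem lemma3p3:
  assumes "CARD('n::finite) \<ge> 2"
  shows "\<exists>c0 > 0. \<exists>c > 0. \<forall>(eps::real) (tau::real) (eta::real) (E :: (real^'n) set) (rho :: real^'n \<Rightarrow> real^'n).
     0 < eps \<and> eps < c0 \<and> 0 < tau \<and> tau \<le> 1 \<and> 0 < eta \<and>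
     finite E \<and> diameter E \<le> 1 \<and>
     (\<forall>x\<in>E. \<forall>y\<in>E. x \<noteq> y \<longrightarrow> dist x y \<ge> tau) \<and>
     (\<forall>x\<in>E. norm (rho x - x) \<le> eta) \<and>
     eta < c * eps * tau
     \<longrightarrow> (\<exists>Phi. eps_distorted_diffeo eps Phi \<and>
            (\<forall>x. (\<forall>y\<in>E. dist x y \<ge> 10) \<longrightarrow> Phi x = x) \<and>
            (\<forall>z\<in>E. \<forall>x\<in>ball z (tau / 10). Phi x = x + (z - rho z)))"
proof (rule exI[of _ 1], intro conjI exI[of _ "1/40"] allI impI; (elim conjE)?)
  fix eps tau eta :: real and E :: "(real^'n) set" and rho :: "real^'n \<Rightarrow> real^'n"
  assume "0 < eps" "eps < 1" "0 < tau" "tau \<le> 1" "finite E"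
    and separated: "\<forall>x\<in>E. \<forall>y\<in>E. x \<noteq> y \<longrightarrow> dist x y \<ge> tau"
    and close: "\<forall>x\<in>E. norm (rho x - x) \<le> eta" and "eta < 1/40 * eps * tau"
  have "norm (z - rho z) \<le> eps * tau / 40" if "z \<in> E" for z
    using close that \<open>eta < 1/40 * eps * tau\<close> by (fastforce simp: norm_minus_commute)
  then obtain Phi where "eps_distorted_diffeo eps Phi"
    and fixes_far: "\<forall>x. (\<forall>y\<in>E. tau/2 \<le> dist x y) \<longrightarrow> Phi x = x"
    and "\<forall>z\<in>E. \<forall>x\<in>ball z (tau/10). Phi x = x + (z - rho z)"
    using eps_distorted_diffeo_translating_balls[of eps tau E "\<lambda>z. z - rho z"]
      \<open>0 < eps\<close> \<open>eps < 1\<close> \<open>0 < tau\<close> \<open>finite E\<close> separated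
    by auto
  moreover have "Phi x = x" if "\<forall>y\<in>E. dist x y \<ge> 10" for x
    using fixes_far that \<open>tau \<le> 1\<close> by force
  ultimately show "\<exists>Phi. eps_distorted_diffeo eps Phi \<and>
      (\<forall>x. (\<forall>y\<in>E. dist x y \<ge> 10) \<longrightarrow> Phi x = x) \<and>
      (\<forall>z\<in>E. \<forall>x\<in>ball z (tau / 10). Phi x = x + (z - rho z))"
    by blast
qed simp_all

end
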